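(* Let $F$ be a field of characteristic $0$, $D$ a simply laced diagram on vertices $v_1,\dots,v_n$, and $\mathfrak k=\mathfrak k(D)$ with Berman generators $X_1,\dots,X_n$. Suppose $v_i\neq v_j$ are vertices such that every vertex $v_r\notin\{v_i,v_j\}$ is adjacent to $v_i$ if and only if it is adjacent to $v_j$. (a) If $v_i,v_j$ are not adjacent, let $D'$ be obtained from $D$ by deleting $v_j$, and let $X'_r$ ($r\neq j$) be the Berman generators of $\mathfrak k':=\mathfrak k(D')$. Then there is a well-defined surjective Lie algebra homomorphism $\varphi:\mathfrak k\to\mathfrak k'$ with $\varphi(X_r)=X'_r$ for $r\ne j$ and $\varphi(X_j)=X'_i$. (b) If $v_i,v_j$ are adjacent, let $D'$ be obtained from $D$ by deleting all edges at $v_j$ except the edge $\{v_i,v_j\}$, and let $X'_1,\dots,X'_n$ be the Berman generators of $\mathfrak k':=\mathfrak k(D')$. Then there is a well-defined surjective Lie algebra homomorphism $\varphi:\mathfrak k\to\mathfrak k'$ with $\varphi(X_r)=X'_r$ for $r\neq j$ and $\varphi(X_j)=[X'_i,X'_j]$.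
   Context: For a simply laced diagram (finite simple graph) $D$ on vertices $v_1,\dots,v_n$, $\mathfrak k(D)$ denotes the maximal compact subalgebra (fixed points of the Cartan--Chevalley involution $e_i\mapsto -f_i$, $f_i\mapsto -e_i$, $h_i\mapsto -h_i$) of the Kac--Moody algebra over $F$ whose generalized Cartan matrix has $a_{ii}=2$ and $a_{ij}=-1$ or $0$ according as $v_i,v_j$ are adjacent or not. By Berman's theorem, $\mathfrak k(D)$ is the Lie algebra with generators $X_1,\dots,X_n$ (the Berman generators, $X_i=e_i-f_i$) and defining relations $[X_a,[X_a,X_b]]=-X_b$ if $v_a,v_b$ are adjacent, $[X_a,X_b]=0$ if $a\ne b$ are non-adjacent. *)

theory Defs
  imports Main
begin

datatype ('a, 'v) lterm =
    Gen 'v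
  | LZero
  | LAdd "('a, 'v) lterm" "('a, 'v) lterm"
  | LScal 'a "('a, 'v) lterm"
  | LBr "('a, 'v) lterm" "('a, 'v) lterm"

fun gens :: "('a, 'v) lterm \<Rightarrow> 'v set" where
  "gens (Gen v) = {v}"
| "gens LZero = {}"
| "gens (LAdd x y) = gens x \<union> gens y"
| "gens (LScal c x) = gens x"
| "gens (LBr x y) = gens x \<union> gens y"

definition wf_term :: "'v set \<Rightarrow> ('a, 'v) lterm \<Rightarrow> bool" where
  "wf_term V t \<longleftrightarrow> gens t \<subseteq> V"

definition simple_diagram :: "'v set \<Rightarrow> ('v \<Rightarrow> 'v \<Rightarrow> bool) \<Rightarrow> bool" where
  "simple_diagram V E \<longleftrightarrow> finite V \<and> (\<forall>x y. E x y \<longrightarrow> E y x) \<and> (\<forall>x. \<not> E x x)"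

text \<open>The congruence on Lie expressions whose quotient is the Lie algebra over 'a with
  generators X_v (v in V) and the Berman relations of the diagram (V,E):
  smallest congruence containing the vector space axioms, bilinearity, alternation,
  the Jacobi identity and the Berman relations.\<close>
inductive kD_eq :: "'v set \<Rightarrow> ('v \<Rightarrow> 'v \<Rightarrow> bool) \<Rightarrow> ('a::field, 'v) lterm \<Rightarrow> ('a, 'v) lterm \<Rightarrow> bool"
  for V E where
  refl: "kD_eq V E x x"
| sym: "kD_eq V E x y \<Longrightarrow> kD_eq V E y x"
| trans: "kD_eq V E x y \<Longrightarrow> kD_eq V E y z \<Longrightarrow> kD_eq V E x z"
| cong_add: "kD_eq V E x x' \<Longrightarrow> kD_eq V E y y' \<Longrightarrow> kD_eq V E (LAdd x y) (LAdd x' y')"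
| cong_scal: "kD_eq V E x x' \<Longrightarrow> kD_eq V E (LScal c x) (LScal c x')"
| cong_br: "kD_eq V E x x' \<Longrightarrow> kD_eq V E y y' \<Longrightarrow> kD_eq V E (LBr x y) (LBr x' y')"
| add_assoc: "kD_eq V E (LAdd (LAdd x y) z) (LAdd x (LAdd y z))"
| add_comm: "kD_eq V E (LAdd x y) (LAdd y x)"
| add_zero: "kD_eq V E (LAdd x LZero) x"
| add_neg: "kD_eq V E (LAdd x (LScal (-1) x)) LZero"
| scal_scal: "kD_eq V E (LScal c (LScal d x)) (LScal (c * d) x)"
| scal_one: "kD_eq V E (LScal 1 x) x"
| scal_add: "kD_eq V E (LScal c (LAdd x y)) (LAdd (LScal c x) (LScal c y))"
| add_scal: "kD_eq V E (LScal (c + d) x) (LAdd (LScal c x) (LScal d x))"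
| br_add_left: "kD_eq V E (LBr (LAdd x y) z) (LAdd (LBr x z) (LBr y z))"
| br_add_right: "kD_eq V E (LBr z (LAdd x y)) (LAdd (LBr z x) (LBr z y))"
| br_scal_left: "kD_eq V E (LBr (LScal c x) y) (LScal c (LBr x y))"
| br_scal_right: "kD_eq V E (LBr x (LScal c y)) (LScal c (LBr x y))"
| br_alt: "kD_eq V E (LBr x x) LZero"
| jacobi: "kD_eq V E (LAdd (LBr x (LBr y z)) (LAdd (LBr y (LBr z x)) (LBr z (LBr x y)))) LZero"
| berman_adj: "a \<in> V \<Longrightarrow> b \<in> V \<Longrightarrow> E a b \<Longrightarrow>
      kD_eq V E (LBr (Gen a) (LBr (Gen a) (Gen b))) (LScal (-1) (Gen b))"
| berman_nonadj: "a \<in> V \<Longrightarrow> b \<in> V \<Longrightarrow> a \<noteq> b \<Longrightarrow> \<not> E a b \<Longrightarrow>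
      kD_eq V E (LBr (Gen a) (Gen b)) LZero"

text \<open>phi (on representatives) induces a well-defined Lie algebra homomorphism
  k(V,E) \<rightarrow> k(V',E') (F-linear, bracket-preserving).\<close>
definition induces_hom ::
  "'v set \<Rightarrow> ('v \<Rightarrow> 'v \<Rightarrow> bool) \<Rightarrow> 'v set \<Rightarrow> ('v \<Rightarrow> 'v \<Rightarrow> bool)
   \<Rightarrow> (('a::field, 'v) lterm \<Rightarrow> ('a, 'v) lterm) \<Rightarrow> bool" where
  "induces_hom V E V' E' \<phi> \<longleftrightarrow>
     (\<forall>x. wf_term V x \<longrightarrow> wf_term V' (\<phi> x)) \<and>
     (\<forall>x y. wf_term V x \<longrightarrow> wf_term V y \<longrightarrow> kD_eq V E x y \<longrightarrow> kD_eq V' E' (\<phi> x) (\<phi> y)) \<and>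
     (\<forall>x y. wf_term V x \<longrightarrow> wf_term V y \<longrightarrow> kD_eq V' E' (\<phi> (LAdd x y)) (LAdd (\<phi> x) (\<phi> y))) \<and>
     (\<forall>c x. wf_term V x \<longrightarrow> kD_eq V' E' (\<phi> (LScal c x)) (LScal c (\<phi> x))) \<and>
     (\<forall>x y. wf_term V x \<longrightarrow> wf_term V y \<longrightarrow> kD_eq V' E' (\<phi> (LBr x y)) (LBr (\<phi> x) (\<phi> y)))"

definition induces_surj ::
  "'v set \<Rightarrow> 'v set \<Rightarrow> ('v \<Rightarrow> 'v \<Rightarrow> bool)
   \<Rightarrow> (('a::field, 'v) lterm \<Rightarrow> ('a, 'v) lterm) \<Rightarrow> bool" where
  "induces_surj V V' E' \<phi> \<longleftrightarrow>
     (\<forall>y. wf_term V' y \<longrightarrow> (\<exists>x. wf_term V x \<and> kD_eq V' E' (\<phi> x) y))"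

end

theory Submission
  imports Defs
begin

(* The algebra k(D) is the quotient of formal Lie expressions by the congruence
   kD_eq V E.  A Lie algebra homomorphism out of k(D) is therefore fixed by the images f v of the
   generators: the substitution  subst f  respects kD_eq as soon as the elements f v satisfy the
   Berman relations of D in the target algebra. *)

declare kD_eq.trans[trans]

context
  fixes V :: "'v set" and E :: "'v \<Rightarrow> 'v \<Rightarrow> bool"
begin

abbreviation keq :: "('a::field,'v) lterm \<Rightarrow> ('a,'v) lterm \<Rightarrow> bool" (infix "\<approx>" 50)
  where "x \<approx> y \<equiv> kD_eq V E x y"

abbreviation neg :: "('a::field,'v) lterm \<Rightarrow> ('a,'v) lterm" where "neg x \<equiv> LScal (-1) x"

subsection \<open>The vector space structure of k(D)\<close>

lemma add_zero_left: "LAdd LZero x \<approx> x"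
  using kD_eq.trans[OF kD_eq.add_comm kD_eq.add_zero] .

text \<open>0 x = 0, obtained from 0 x = 0 x + 0 x by cancelling.\<close>
lemma scal_zero: "LScal 0 x \<approx> LZero"
proof -
  let ?s = "LScal 0 x"
  have "LZero \<approx> LAdd ?s (neg ?s)" by (rule kD_eq.sym, rule kD_eq.add_neg)
  also have "\<dots> \<approx> LAdd (LAdd ?s ?s) (neg ?s)"
    using kD_eq.cong_add[OF kD_eq.add_scal[where c=0 and d=0, simplified] kD_eq.refl] .
  also have "\<dots> \<approx> LAdd ?s (LAdd ?s (neg ?s))" by (rule kD_eq.add_assoc)
  also have "\<dots> \<approx> LAdd ?s LZero" by (rule kD_eq.cong_add[OF kD_eq.refl kD_eq.add_neg])
  also have "\<dots> \<approx> ?s" by (rule kD_eq.add_zero)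
  finally show ?thesis by (rule kD_eq.sym)
qed

lemma scal_of_zero: "LScal c LZero \<approx> LZero"
proof -
  have "LScal c LZero \<approx> LScal c (LScal 0 LZero)"
    by (rule kD_eq.cong_scal[OF kD_eq.sym[OF scal_zero]])
  also have "\<dots> \<approx> LScal (c * 0) LZero" by (rule kD_eq.scal_scal)
  also have "\<dots> \<approx> LZero" using scal_zero by simp
  finally show ?thesis .
qed

lemma scal_zero_cong: "x \<approx> LZero \<Longrightarrow> LScal c x \<approx> LZero"
  using kD_eq.trans[OF kD_eq.cong_scal scal_of_zero] by blast

lemma add_zero_cong_left: "x \<approx> LZero \<Longrightarrow> LAdd x y \<approx> y"
  using kD_eq.trans[OF kD_eq.cong_add[OF _ kD_eq.refl] add_zero_left] by blast

lemma add_zero_cong_right: "y \<approx> LZero \<Longrightarrow> LAdd x y \<approx> x"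
  using kD_eq.trans[OF kD_eq.cong_add[OF kD_eq.refl] kD_eq.add_zero] by blast

lemma sum_zero_neg: "LAdd a b \<approx> LZero \<Longrightarrow> a \<approx> neg b"
proof -
  assume h: "LAdd a b \<approx> LZero"
  have "a \<approx> LAdd a LZero" by (rule kD_eq.sym, rule kD_eq.add_zero)
  also have "\<dots> \<approx> LAdd a (LAdd b (neg b))"
    by (rule kD_eq.cong_add[OF kD_eq.refl kD_eq.sym[OF kD_eq.add_neg]])
  also have "\<dots> \<approx> LAdd (LAdd a b) (neg b)" by (rule kD_eq.sym, rule kD_eq.add_assoc)
  also have "\<dots> \<approx> neg b" by (rule add_zero_cong_left[OF h])
  finally show ?thesis .
qed

lemma sum_eq_move: "p \<approx> LAdd q r \<Longrightarrow> q \<approx> LAdd p (neg r)"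
proof -
  assume h: "p \<approx> LAdd q r"
  have "q \<approx> LAdd q LZero" by (rule kD_eq.sym, rule kD_eq.add_zero)
  also have "\<dots> \<approx> LAdd q (LAdd r (neg r))"
    by (rule kD_eq.cong_add[OF kD_eq.refl kD_eq.sym[OF kD_eq.add_neg]])
  also have "\<dots> \<approx> LAdd (LAdd q r) (neg r)" by (rule kD_eq.sym, rule kD_eq.add_assoc)
  also have "\<dots> \<approx> LAdd p (neg r)" by (rule kD_eq.cong_add[OF kD_eq.sym[OF h] kD_eq.refl])
  finally show ?thesis .
qed

lemma neg_neg: "neg (neg x) \<approx> x"
proof -
  have "neg (neg x) \<approx> LScal ((-1) * (-1)) x" by (rule kD_eq.scal_scal)
  also have "\<dots> \<approx> x" using kD_eq.scal_one by simp
  finally show ?thesis .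
qed

lemma neg_eq_swap: "a \<approx> neg b \<Longrightarrow> neg a \<approx> b"
  using kD_eq.trans[OF kD_eq.cong_scal neg_neg] by blast

text \<open>In characteristic 0, w = -w forces w = 0 (multiply 2w = 0 by 1/2).\<close>
lemma self_neg_zero: "(w :: ('a::field_char_0,'v) lterm) \<approx> neg w \<Longrightarrow> w \<approx> LZero"
proof -
  assume h: "w \<approx> neg w"
  have double: "LAdd w w \<approx> LZero"
    using kD_eq.trans[OF kD_eq.cong_add[OF kD_eq.refl h] kD_eq.add_neg] .
  have "w \<approx> LScal 1 w" by (rule kD_eq.sym, rule kD_eq.scal_one)
  also have "\<dots> = LScal ((1/2) * 2) w" by simp
  also have "\<dots> \<approx> LScal (1/2) (LScal 2 w)" by (rule kD_eq.sym, rule kD_eq.scal_scal)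
  also have "LScal 2 w \<approx> LAdd w w"
    using kD_eq.trans[OF kD_eq.add_scal[where c=1 and d=1]
        kD_eq.cong_add[OF kD_eq.scal_one kD_eq.scal_one]]
    by simp
  hence "LScal (1/2) (LScal 2 w) \<approx> LZero" by (rule scal_zero_cong[OF kD_eq.trans[OF _ double]])
  finally show ?thesis .
qed

subsection \<open>The bracket of k(D)\<close>

lemma br_zero_left: "LBr LZero y \<approx> LZero"
proof -
  have "LBr LZero y \<approx> LBr (LScal 0 LZero) y"
    by (rule kD_eq.cong_br[OF kD_eq.sym[OF scal_zero] kD_eq.refl])
  also have "\<dots> \<approx> LScal 0 (LBr LZero y)" by (rule kD_eq.br_scal_left)
  also have "\<dots> \<approx> LZero" by (rule scal_zero)
  finally show ?thesis .
qed

lemma br_zero_right: "LBr y LZero \<approx> LZero"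
proof -
  have "LBr y LZero \<approx> LBr y (LScal 0 LZero)"
    by (rule kD_eq.cong_br[OF kD_eq.refl kD_eq.sym[OF scal_zero]])
  also have "\<dots> \<approx> LScal 0 (LBr y LZero)" by (rule kD_eq.br_scal_right)
  also have "\<dots> \<approx> LZero" by (rule scal_zero)
  finally show ?thesis .
qed

lemma br_zero_cong_left: "x \<approx> LZero \<Longrightarrow> LBr x y \<approx> LZero"
  using kD_eq.trans[OF kD_eq.cong_br[OF _ kD_eq.refl] br_zero_left] by blast

lemma br_zero_cong_right: "y \<approx> LZero \<Longrightarrow> LBr x y \<approx> LZero"
  using kD_eq.trans[OF kD_eq.cong_br[OF kD_eq.refl] br_zero_right] by blast

text \<open>Anticommutativity, from alternation applied to [x+y,x+y].\<close>
lemma anticomm: "LBr x y \<approx> neg (LBr y x)"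
proof -
  have "LZero \<approx> LBr (LAdd x y) (LAdd x y)" by (rule kD_eq.sym, rule kD_eq.br_alt)
  also have "\<dots> \<approx> LAdd (LBr x (LAdd x y)) (LBr y (LAdd x y))" by (rule kD_eq.br_add_left)
  also have "\<dots> \<approx> LAdd (LAdd (LBr x x) (LBr x y)) (LAdd (LBr y x) (LBr y y))"
    by (rule kD_eq.cong_add[OF kD_eq.br_add_right kD_eq.br_add_right])
  also have "\<dots> \<approx> LAdd (LBr x y) (LBr y x)"
    by (rule kD_eq.cong_add[OF add_zero_cong_left[OF kD_eq.br_alt]
          add_zero_cong_right[OF kD_eq.br_alt]])
  finally show ?thesis by (rule sum_zero_neg[OF kD_eq.sym])
qed

lemma br_neg_right: "LBr x (LBr y z) \<approx> neg (LBr x (LBr z y))"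
  using kD_eq.trans[OF kD_eq.cong_br[OF kD_eq.refl anticomm] kD_eq.br_scal_right] .

lemma jacobi_derivation: "LBr x (LBr y z) \<approx> LAdd (LBr (LBr x y) z) (LBr y (LBr x z))"
proof -
  have "LBr x (LBr y z) \<approx> neg (LAdd (LBr y (LBr z x)) (LBr z (LBr x y)))"
    by (rule sum_zero_neg[OF kD_eq.jacobi])
  also have "\<dots> \<approx> LAdd (neg (LBr y (LBr z x))) (neg (LBr z (LBr x y)))"
    by (rule kD_eq.scal_add)
  also have "\<dots> \<approx> LAdd (neg (LBr z (LBr x y))) (neg (LBr y (LBr z x)))"
    by (rule kD_eq.add_comm)
  also have "\<dots> \<approx> LAdd (LBr (LBr x y) z) (LBr y (LBr x z))"
    by (rule kD_eq.cong_add[OF neg_eq_swap[OF anticomm]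
          kD_eq.sym[OF br_neg_right]])
  finally show ?thesis .
qed

lemma jacobi_left: "LBr (LBr x y) z \<approx> LAdd (LBr x (LBr y z)) (neg (LBr y (LBr x z)))"
  by (rule sum_eq_move[OF jacobi_derivation])

lemma br_commutator_centralized: "LBr x b \<approx> LZero \<Longrightarrow> LBr x (LBr a b) \<approx> LBr (LBr x a) b"
  using kD_eq.trans[OF jacobi_derivation add_zero_cong_right[OF br_zero_cong_right]] by blast

lemma centralizer_br:
  assumes "LBr x a \<approx> LZero" "LBr x b \<approx> LZero"
  shows "LBr x (LBr a b) \<approx> LZero"
  using kD_eq.trans[OF br_commutator_centralized[OF assms(2)] br_zero_cong_left[OF assms(1)]] .

lemma centralizer_br_left:
  assumes "LBr x a \<approx> LZero" "LBr x b \<approx> LZero"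
  shows "LBr (LBr a b) x \<approx> LZero"
  using kD_eq.trans[OF anticomm scal_zero_cong[OF centralizer_br[OF assms]]] .

subsection \<open>Commutators of adjacent pairs\<close>

text \<open>Throughout, A and B satisfy the Berman relations of an edge: [A,[A,B]] = -B and
  [B,[B,A]] = -A.  The lemmas show that Y = [A,B] satisfies the Berman relations of an edge with A,
  and with every X that satisfies the relations of an edge with A and commutes with B.\<close>

lemma adj_pair_flip: "LBr A (LBr A B) \<approx> neg B \<Longrightarrow> LBr (LBr A B) A \<approx> B"
  using kD_eq.trans[OF anticomm neg_eq_swap] by blast

lemma adj_pair_commutator_right:
  "LBr A (LBr A B) \<approx> neg B \<Longrightarrow> LBr A (LBr A (LBr A B)) \<approx> neg (LBr A B)"
  using kD_eq.trans[OF kD_eq.cong_br[OF kD_eq.refl] kD_eq.br_scal_right] by blast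

lemma adj_pair_commutator_left:
  assumes hA: "LBr A (LBr A B) \<approx> neg B" and hB: "LBr B (LBr B A) \<approx> neg A"
  shows "LBr (LBr A B) (LBr (LBr A B) A) \<approx> neg A"
proof -
  have "LBr (LBr A B) (LBr (LBr A B) A) \<approx> LBr (LBr A B) B"
    by (rule kD_eq.cong_br[OF kD_eq.refl adj_pair_flip[OF hA]])
  also have "\<dots> \<approx> neg (LBr B (LBr A B))" by (rule anticomm)
  also have "\<dots> \<approx> LBr B (LBr B A)" by (rule neg_eq_swap[OF br_neg_right])
  also have "\<dots> \<approx> neg A" by (rule hB)
  finally show ?thesis .
qed

lemma adj_over_commutator:
  assumes hXA: "LBr X (LBr X A) \<approx> neg A" and hXB: "LBr X B \<approx> LZero"
  shows "LBr X (LBr X (LBr A B)) \<approx> neg (LBr A B)"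
proof -
  have "LBr X (LBr X (LBr A B)) \<approx> LBr X (LBr (LBr X A) B)"
    by (rule kD_eq.cong_br[OF kD_eq.refl br_commutator_centralized[OF hXB]])
  also have "\<dots> \<approx> LBr (LBr X (LBr X A)) B" by (rule br_commutator_centralized[OF hXB])
  also have "\<dots> \<approx> LBr (neg A) B" by (rule kD_eq.cong_br[OF hXA kD_eq.refl])
  also have "\<dots> \<approx> neg (LBr A B)" by (rule kD_eq.br_scal_left)
  finally show ?thesis .
qed

text \<open>The key vanishing: with Z = [A,X], the element [A,[B,Z]] equals both [[A,B],Z] and its
  negative, hence is 0 in characteristic 0.\<close>
lemma adj_pair_neighbour_vanish:
  fixes A :: "('a::field_char_0,'v) lterm"
  assumes hA2: "LBr A (LBr A X) \<approx> neg X" and hBX: "LBr B X \<approx> LZero"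
    and hA: "LBr A (LBr A B) \<approx> neg B"
  shows "LBr A (LBr B (LBr A X)) \<approx> LZero"
proof -
  let ?Y = "LBr A B" and ?Z = "LBr A X"
  have YX: "LBr ?Y X \<approx> neg (LBr B ?Z)"
    using kD_eq.trans[OF jacobi_left add_zero_cong_left[OF br_zero_cong_right[OF hBX]]] .
  have "LBr A (LBr B ?Z) \<approx> LAdd (LBr ?Y ?Z) (LBr B (LBr A ?Z))" by (rule jacobi_derivation)
  also have "LBr B (LBr A ?Z) \<approx> LZero"
    using kD_eq.trans[OF kD_eq.trans[OF kD_eq.cong_br[OF kD_eq.refl hA2] kD_eq.br_scal_right]
        scal_zero_cong[OF hBX]] .
  hence "LAdd (LBr ?Y ?Z) (LBr B (LBr A ?Z)) \<approx> LBr ?Y ?Z" by (rule add_zero_cong_right)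
  finally have pos: "LBr A (LBr B ?Z) \<approx> LBr ?Y ?Z" .
  have "LBr ?Y ?Z \<approx> LAdd (LBr (LBr ?Y A) X) (LBr A (LBr ?Y X))" by (rule jacobi_derivation)
  also have "LBr (LBr ?Y A) X \<approx> LZero"
    using kD_eq.trans[OF kD_eq.cong_br[OF adj_pair_flip[OF hA] kD_eq.refl] hBX] .
  hence "LAdd (LBr (LBr ?Y A) X) (LBr A (LBr ?Y X)) \<approx> LBr A (LBr ?Y X)"
    by (rule add_zero_cong_left)
  also have "\<dots> \<approx> neg (LBr A (LBr B ?Z))"
    using kD_eq.trans[OF kD_eq.cong_br[OF kD_eq.refl YX] kD_eq.br_scal_right] .
  finally have neg: "LBr ?Y ?Z \<approx> neg (LBr A (LBr B ?Z))" .
  show ?thesis by (rule self_neg_zero[OF kD_eq.trans[OF pos neg]])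
qed

lemma adj_pair_commutator_neighbour:
  fixes A :: "('a::field_char_0,'v) lterm"
  assumes hA2: "LBr A (LBr A X) \<approx> neg X" and hBX: "LBr B X \<approx> LZero"
    and hA: "LBr A (LBr A B) \<approx> neg B" and hB: "LBr B (LBr B A) \<approx> neg A"
  shows "LBr (LBr A B) (LBr (LBr A B) X) \<approx> neg X"
proof -
  let ?Y = "LBr A B" and ?Z = "LBr A X"
  have YX: "LBr ?Y X \<approx> neg (LBr B ?Z)"
    using kD_eq.trans[OF jacobi_left add_zero_cong_left[OF br_zero_cong_right[OF hBX]]] .
  have "LBr ?Y (LBr B ?Z) \<approx> LAdd (LBr A (LBr B (LBr B ?Z))) (neg (LBr B (LBr A (LBr B ?Z))))"
    by (rule jacobi_left)
  also have "\<dots> \<approx> LBr A (LBr B (LBr B ?Z))"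
    by (rule add_zero_cong_right[OF scal_zero_cong[OF br_zero_cong_right[OF
            adj_pair_neighbour_vanish[OF hA2 hBX hA]]]])
  also have "\<dots> \<approx> LBr A (neg ?Z)"
    by (rule kD_eq.cong_br[OF kD_eq.refl adj_over_commutator[OF hB hBX]])
  also have "\<dots> \<approx> neg (neg X)"
    using kD_eq.trans[OF kD_eq.br_scal_right kD_eq.cong_scal[OF hA2]] .
  also have "\<dots> \<approx> X" by (rule neg_neg)
  finally have YBZ: "LBr ?Y (LBr B ?Z) \<approx> X" .
  have "LBr ?Y (LBr ?Y X) \<approx> LBr ?Y (neg (LBr B ?Z))" by (rule kD_eq.cong_br[OF kD_eq.refl YX])
  also have "\<dots> \<approx> neg (LBr ?Y (LBr B ?Z))" by (rule kD_eq.br_scal_right)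
  also have "\<dots> \<approx> neg X" by (rule kD_eq.cong_scal[OF YBZ])
  finally show ?thesis .
qed

end

subsection \<open>Homomorphisms defined on generators\<close>

fun subst :: "('v \<Rightarrow> ('a,'v) lterm) \<Rightarrow> ('a,'v) lterm \<Rightarrow> ('a,'v) lterm" where
  "subst f (Gen v) = f v"
| "subst f LZero = LZero"
| "subst f (LAdd x y) = LAdd (subst f x) (subst f y)"
| "subst f (LScal c x) = LScal c (subst f x)"
| "subst f (LBr x y) = LBr (subst f x) (subst f y)"

definition satisfies_berman ::
  "'v set \<Rightarrow> ('v \<Rightarrow> 'v \<Rightarrow> bool) \<Rightarrow> 'v set \<Rightarrow> ('v \<Rightarrow> 'v \<Rightarrow> bool)
   \<Rightarrow> ('v \<Rightarrow> ('a::field,'v) lterm) \<Rightarrow> bool" where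
  "satisfies_berman V E V' E' f \<longleftrightarrow>
     (\<forall>a\<in>V. gens (f a) \<subseteq> V') \<and>
     (\<forall>a\<in>V. \<forall>b\<in>V. E a b \<longrightarrow> kD_eq V' E' (LBr (f a) (LBr (f a) (f b))) (LScal (-1) (f b))) \<and>
     (\<forall>a\<in>V. \<forall>b\<in>V. a \<noteq> b \<longrightarrow> \<not> E a b \<longrightarrow> kD_eq V' E' (LBr (f a) (f b)) LZero)"

lemma subst_respects_kD_eq:
  assumes "kD_eq V E x y" and "satisfies_berman V E V' E' f"
  shows "kD_eq V' E' (subst f x) (subst f y)"
  using assms unfolding satisfies_berman_def by induction (auto intro: kD_eq.intros)

lemma subst_wf: "wf_term V x \<Longrightarrow> \<forall>r\<in>V. gens (f r) \<subseteq> V' \<Longrightarrow> wf_term V' (subst f x)"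
  unfolding wf_term_def by (induction x) auto

lemma subst_induces_hom:
  assumes "satisfies_berman V E V' E' f"
  shows "induces_hom V E V' E' (subst f)"
  using assms subst_respects_kD_eq[OF _ assms] subst_wf[of V _ f V']
  unfolding induces_hom_def satisfies_berman_def by (auto intro: kD_eq.refl)

lemma subst_subst_inverse:
  "\<forall>r\<in>gens y. kD_eq V E (subst f (g r)) (Gen r) \<Longrightarrow> kD_eq V E (subst f (subst g y)) y"
  by (induction y) (auto intro: kD_eq.intros)

lemma subst_induces_surj:
  fixes f g :: "'v \<Rightarrow> ('a::field,'v) lterm"
  assumes "\<forall>r\<in>V'. gens (g r) \<subseteq> V \<and> kD_eq V' E' (subst f (g r)) (Gen r)"
  shows "induces_surj V V' E' (subst f)"
  unfolding induces_surj_def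
proof (intro allI impI)
  fix y :: "('a,'v) lterm" assume y: "wf_term V' y"
  then have "wf_term V (subst g y)" using assms subst_wf[of V' y g V] by auto
  moreover have "kD_eq V' E' (subst f (subst g y)) y"
    using y assms by (intro subst_subst_inverse) (auto simp: wf_term_def)
  ultimately show "\<exists>x. wf_term V x \<and> kD_eq V' E' (subst f x) y" by blast
qed

subsection \<open>Twin vertices\<close>

locale twin_vertices =
  fixes V :: "'v set" and E :: "'v \<Rightarrow> 'v \<Rightarrow> bool" and i j :: 'v
  assumes diagram: "simple_diagram V E"
    and i_in: "i \<in> V" and j_in: "j \<in> V" and i_ne_j: "i \<noteq> j"
    and twins: "\<forall>r\<in>V - {i, j}. (E r i \<longleftrightarrow> E r j)"
begin

lemma E_sym: "E x y \<Longrightarrow> E y x"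
  and E_irrefl: "\<not> E x x"
  using diagram unfolding simple_diagram_def by auto

lemma twin_iff: "r \<in> V \<Longrightarrow> r \<noteq> i \<Longrightarrow> r \<noteq> j \<Longrightarrow> E r i \<longleftrightarrow> E r j"
  using twins by auto

end

locale nonadjacent_twins = twin_vertices V E i j for V :: "'v set" and E i j +
  assumes not_adj: "\<not> E i j"
begin

definition fold_vertex :: "'v \<Rightarrow> 'v" where
  "fold_vertex r = (if r = j then i else r)"

lemma fold_vertex_in: "r \<in> V \<Longrightarrow> fold_vertex r \<in> V - {j}"
  using i_in i_ne_j by (auto simp: fold_vertex_def)

text \<open>Since i and j have the same neighbours and are not adjacent, folding j onto i preserves
  both adjacency and non-adjacency.\<close>
lemma fold_vertex_adj: "a \<in> V \<Longrightarrow> b \<in> V \<Longrightarrow> E a b \<Longrightarrow> E (fold_vertex a) (fold_vertex b)"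
  using twin_iff[of a] twin_iff[of b] not_adj E_sym E_irrefl
  unfolding fold_vertex_def by metis

lemma fold_vertex_nonadj:
  "a \<in> V \<Longrightarrow> b \<in> V \<Longrightarrow> \<not> E a b \<Longrightarrow> \<not> E (fold_vertex a) (fold_vertex b)"
  using twin_iff[of a] twin_iff[of b] E_sym E_irrefl
  unfolding fold_vertex_def by metis

lemma fold_satisfies_berman:
  "satisfies_berman V E (V - {j}) E (\<lambda>r. Gen (fold_vertex r) :: ('a::field,'v) lterm)"
  unfolding satisfies_berman_def
proof (intro conjI ballI impI)
  fix a b assume ab: "a \<in> V" "b \<in> V"
  show "gens (Gen (fold_vertex a) :: ('a,'v) lterm) \<subseteq> V - {j}"
    using fold_vertex_in[OF ab(1)] by simp
  show "kD_eq (V - {j}) E (LBr (Gen (fold_vertex a)) (LBr (Gen (fold_vertex a)) (Gen (fold_vertex b))))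
      (LScal (-1) (Gen (fold_vertex b)) :: ('a,'v) lterm)" if "E a b"
    using ab that by (intro kD_eq.berman_adj fold_vertex_in fold_vertex_adj)
  show "kD_eq (V - {j}) E (LBr (Gen (fold_vertex a)) (Gen (fold_vertex b))) (LZero :: ('a,'v) lterm)"
    if "\<not> E a b"
  proof (cases "fold_vertex a = fold_vertex b")
    case True
    then show ?thesis by (simp add: kD_eq.br_alt)
  next
    case False
    then show ?thesis
      using ab that by (intro kD_eq.berman_nonadj fold_vertex_in fold_vertex_nonadj)
  qed
qed

theorem folding_hom:
  "\<exists>\<phi> :: ('a::field, 'v) lterm \<Rightarrow> ('a, 'v) lterm.
     induces_hom V E (V - {j}) E \<phi> \<and> induces_surj V (V - {j}) E \<phi> \<and>
     (\<forall>r\<in>V - {j}. kD_eq (V - {j}) E (\<phi> (Gen r)) (Gen r)) \<and>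
     kD_eq (V - {j}) E (\<phi> (Gen j)) (Gen i)"
proof (intro exI conjI)
  let ?\<phi> = "subst (\<lambda>r. Gen (fold_vertex r) :: ('a,'v) lterm)"
  show "induces_hom V E (V - {j}) E ?\<phi>"
    by (rule subst_induces_hom[OF fold_satisfies_berman])
  show "induces_surj V (V - {j}) E ?\<phi>"
    by (rule subst_induces_surj[where g = Gen]) (auto simp: fold_vertex_def intro: kD_eq.refl)
  show "\<forall>r\<in>V - {j}. kD_eq (V - {j}) E (?\<phi> (Gen r)) (Gen r)"
    and "kD_eq (V - {j}) E (?\<phi> (Gen j)) (Gen i)"
    by (auto simp: fold_vertex_def intro: kD_eq.refl)
qed

end

locale adjacent_twins = twin_vertices V E i j for V :: "'v set" and E i j +
  assumes adj: "E i j"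
begin

definition E_cut :: "'v \<Rightarrow> 'v \<Rightarrow> bool" where
  "E_cut = (\<lambda>x y. E x y \<and> ((x = j \<or> y = j) \<longrightarrow> {x, y} = {i, j}))"

lemma E_cut_ij: "E_cut i j" "E_cut j i"
  using adj E_sym by (auto simp: E_cut_def)

lemma E_cut_away: "a \<noteq> j \<Longrightarrow> b \<noteq> j \<Longrightarrow> E_cut a b \<longleftrightarrow> E a b"
  by (auto simp: E_cut_def)

lemma E_cut_at_j: "a \<noteq> i \<Longrightarrow> \<not> E_cut a j \<and> \<not> E_cut j a"
  using i_ne_j by (auto simp: E_cut_def doubleton_eq_iff)

definition commutator_gen :: "'v \<Rightarrow> ('a::field,'v) lterm" where
  "commutator_gen r = (if r = j then LBr (Gen i) (Gen j) else Gen r)"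

lemma berman_ij: "kD_eq V E_cut (LBr (Gen i) (LBr (Gen i) (Gen j))) (LScal (-1) (Gen j))"
  and berman_ji: "kD_eq V E_cut (LBr (Gen j) (LBr (Gen j) (Gen i))) (LScal (-1) (Gen i))"
  using i_in j_in E_cut_ij by (auto intro: kD_eq.berman_adj)

lemma cut_neighbour:
  assumes "b \<in> V" "b \<noteq> i" "b \<noteq> j" "E i b"
  shows "kD_eq V E_cut (LBr (Gen i) (LBr (Gen i) (Gen b))) (LScal (-1) (Gen b))"
    and "kD_eq V E_cut (LBr (Gen b) (LBr (Gen b) (Gen i))) (LScal (-1) (Gen i))"
    and "kD_eq V E_cut (LBr (Gen j) (Gen b)) LZero"
    and "kD_eq V E_cut (LBr (Gen b) (Gen j)) LZero"
  using assms i_in j_in i_ne_j E_sym E_cut_away[of i b] E_cut_away[of b i] E_cut_at_j[of b]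
  by (auto intro: kD_eq.berman_adj kD_eq.berman_nonadj)

lemma cut_non_neighbour:
  assumes "b \<in> V" "b \<noteq> i" "b \<noteq> j" "\<not> E b i"
  shows "kD_eq V E_cut (LBr (Gen b) (Gen i)) LZero"
    and "kD_eq V E_cut (LBr (Gen b) (Gen j)) LZero"
  using assms i_in j_in E_cut_away[of b i] E_cut_at_j[of b]
  by (auto intro: kD_eq.berman_nonadj)

lemma commutator_gen_adj:
  assumes ab: "a \<in> V" "b \<in> V" "E a b"
  shows "kD_eq V E_cut (LBr (commutator_gen a) (LBr (commutator_gen a) (commutator_gen b)))
           (LScal (-1) (commutator_gen b) :: ('a::field_char_0,'v) lterm)"
proof -
  have "a \<noteq> b" using ab E_irrefl by blast
  consider "a = j" "b = i" | "a = j" "b \<noteq> i" | "a = i" "b = j" | "a \<noteq> i" "a \<noteq> j" "b = j"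
    | "a \<noteq> j" "b \<noteq> j" by blast
  then show ?thesis
  proof cases
    case 1
    then show ?thesis
      using adj_pair_commutator_left[OF berman_ij berman_ji] i_ne_j by (simp add: commutator_gen_def)
  next
    case 2
    then have nb: "b \<in> V" "b \<noteq> i" "b \<noteq> j" "E i b"
      using twin_iff[of b] ab E_sym \<open>a \<noteq> b\<close> by blast+
    show ?thesis
      using adj_pair_commutator_neighbour[OF cut_neighbour(1,3)[OF nb] berman_ij berman_ji]
        2 nb by (simp add: commutator_gen_def)
  next
    case 3
    then show ?thesis
      using adj_pair_commutator_right[OF berman_ij] i_ne_j by (simp add: commutator_gen_def)
  next
    case 4
    then have na: "a \<in> V" "a \<noteq> i" "a \<noteq> j" "E i a"
      using twin_iff[of a] ab E_sym by blast+
    show ?thesis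
      using adj_over_commutator[OF cut_neighbour(2,4)[OF na]] 4 by (simp add: commutator_gen_def)
  next
    case 5
    then show ?thesis
      using ab E_cut_away by (auto simp: commutator_gen_def intro: kD_eq.berman_adj)
  qed
qed

lemma commutator_gen_nonadj:
  assumes ab: "a \<in> V" "b \<in> V" "a \<noteq> b" "\<not> E a b"
  shows "kD_eq V E_cut (LBr (commutator_gen a) (commutator_gen b))
           (LZero :: ('a::field_char_0,'v) lterm)"
proof -
  consider "a = j" | "b = j" | "a \<noteq> j" "b \<noteq> j" by blast
  then show ?thesis
  proof cases
    case 1
    then have nb: "b \<in> V" "b \<noteq> i" "b \<noteq> j" "\<not> E b i"
      using ab adj E_sym twin_iff[of b] by blast+
    show ?thesis
      using centralizer_br_left[OF cut_non_neighbour(1,2)[OF nb]] 1 nb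
      by (simp add: commutator_gen_def)
  next
    case 2
    then have na: "a \<in> V" "a \<noteq> i" "a \<noteq> j" "\<not> E a i"
      using ab adj twin_iff[of a] by blast+
    show ?thesis
      using centralizer_br[OF cut_non_neighbour(1,2)[OF na]] 2 na
      by (simp add: commutator_gen_def)
  next
    case 3
    then show ?thesis
      using ab E_cut_away by (auto simp: commutator_gen_def intro: kD_eq.berman_nonadj)
  qed
qed

theorem commutator_hom:
  "\<exists>\<phi> :: ('a::field_char_0, 'v) lterm \<Rightarrow> ('a, 'v) lterm.
     induces_hom V E V E_cut \<phi> \<and> induces_surj V V E_cut \<phi> \<and>
     (\<forall>r\<in>V - {j}. kD_eq V E_cut (\<phi> (Gen r)) (Gen r)) \<and>
     kD_eq V E_cut (\<phi> (Gen j)) (LBr (Gen i) (Gen j))"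
proof (intro exI conjI)
  let ?\<phi> = "subst (commutator_gen :: 'v \<Rightarrow> ('a,'v) lterm)"
  have "satisfies_berman V E V E_cut (commutator_gen :: 'v \<Rightarrow> ('a,'v) lterm)"
    unfolding satisfies_berman_def
  proof (intro conjI ballI impI)
    fix a b assume ab: "a \<in> V" "b \<in> V"
    show "gens (commutator_gen a :: ('a,'v) lterm) \<subseteq> V"
      using ab i_in j_in by (simp add: commutator_gen_def)
    show "kD_eq V E_cut (LBr (commutator_gen a) (LBr (commutator_gen a) (commutator_gen b)))
        (LScal (-1) (commutator_gen b) :: ('a,'v) lterm)" if "E a b"
      using ab that by (rule commutator_gen_adj)
    show "kD_eq V E_cut (LBr (commutator_gen a) (commutator_gen b)) (LZero :: ('a,'v) lterm)"
      if "a \<noteq> b" "\<not> E a b"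
      using ab that by (rule commutator_gen_nonadj)
  qed
  then show "induces_hom V E V E_cut ?\<phi>" by (rule subst_induces_hom)
  (* X_j = -[X_i,[X_i,X_j]] is the image of -[X_i,X_j] *)
  let ?g = "\<lambda>r. if r = j then LScal (-1) (LBr (Gen i) (Gen j)) else Gen r :: ('a,'v) lterm"
  show "induces_surj V V E_cut ?\<phi>"
  proof (rule subst_induces_surj[where g = ?g], intro ballI conjI)
    fix r assume "r \<in> V"
    show "gens (?g r) \<subseteq> V" using \<open>r \<in> V\<close> i_in j_in by auto
    show "kD_eq V E_cut (?\<phi> (?g r)) (Gen r)"
      using neg_eq_swap[OF berman_ij] i_ne_j
      by (auto simp: commutator_gen_def intro: kD_eq.refl)
  qed
  show "\<forall>r\<in>V - {j}. kD_eq V E_cut (?\<phi> (Gen r)) (Gen r)"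
    and "kD_eq V E_cut (?\<phi> (Gen j)) (LBr (Gen i) (Gen j))"
    by (auto simp: commutator_gen_def intro: kD_eq.refl)
qed

end

theorem mainTheorem4:
  fixes V :: "'v set" and E :: "'v \<Rightarrow> 'v \<Rightarrow> bool" and i j :: 'v
  assumes "simple_diagram V E"
    and "i \<in> V" and "j \<in> V" and "i \<noteq> j"
    and "\<forall>r\<in>V - {i, j}. (E r i \<longleftrightarrow> E r j)"
  shows
    "(\<not> E i j \<longrightarrow>
       (\<exists>\<phi> :: ('a::field_char_0, 'v) lterm \<Rightarrow> ('a, 'v) lterm.
          induces_hom V E (V - {j}) E \<phi> \<and> induces_surj V (V - {j}) E \<phi> \<and>
          (\<forall>r\<in>V - {j}. kD_eq (V - {j}) E (\<phi> (Gen r)) (Gen r)) \<and>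
          kD_eq (V - {j}) E (\<phi> (Gen j)) (Gen i)))
   \<and>
    (E i j \<longrightarrow>
       (let E' = (\<lambda>x y. E x y \<and> ((x = j \<or> y = j) \<longrightarrow> {x, y} = {i, j})) in
       (\<exists>\<phi> :: ('a::field_char_0, 'v) lterm \<Rightarrow> ('a, 'v) lterm.
          induces_hom V E V E' \<phi> \<and> induces_surj V V E' \<phi> \<and>
          (\<forall>r\<in>V - {j}. kD_eq V E' (\<phi> (Gen r)) (Gen r)) \<and>
          kD_eq V E' (\<phi> (Gen j)) (LBr (Gen i) (Gen j)))))"
proof (intro conjI impI)
  interpret twin_vertices V E i j using assms by unfold_locales
  assume "\<not> E i j"
  then interpret nonadjacent_twins V E i j by unfold_locales
  show "\<exists>\<phi> :: ('a::field_char_0, 'v) lterm \<Rightarrow> ('a, 'v) lterm.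
          induces_hom V E (V - {j}) E \<phi> \<and> induces_surj V (V - {j}) E \<phi> \<and>
          (\<forall>r\<in>V - {j}. kD_eq (V - {j}) E (\<phi> (Gen r)) (Gen r)) \<and>
          kD_eq (V - {j}) E (\<phi> (Gen j)) (Gen i)"
    by (rule folding_hom)
next
  interpret twin_vertices V E i j using assms by unfold_locales
  assume "E i j"
  then interpret adjacent_twins V E i j by unfold_locales
  show "let E' = (\<lambda>x y. E x y \<and> ((x = j \<or> y = j) \<longrightarrow> {x, y} = {i, j})) in
       (\<exists>\<phi> :: ('a::field_char_0, 'v) lterm \<Rightarrow> ('a, 'v) lterm.
          induces_hom V E V E' \<phi> \<and> induces_surj V V E' \<phi> \<and>
          (\<forall>r\<in>V - {j}. kD_eq V E' (\<phi> (Gen r)) (Gen r)) \<and>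
          kD_eq V E' (\<phi> (Gen j)) (LBr (Gen i) (Gen j)))"
    using commutator_hom unfolding E_cut_def Let_def .
qed

end
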